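(* Let $q(\mathbf{y},\mathbf{x})$ be a joint distribution of a label $\mathbf{y}$ and inputs $\mathbf{x}\in\mathbb{R}^d$ with finite entropies $\mathbf{H}_q(\mathbf{y}\mid\mathbf{x})$ and $\mathbf{H}_q(\mathbf{y})$. For any explanation $e$ that is encoding and any explanation $e'$ that is not encoding, there exists $\alpha^*$ such that for all $\alpha>\alpha^*$, $\mathrm{STRIPE\text{-}X}_\alpha(q,e')>\mathrm{STRIPE\text{-}X}_\alpha(q,e)$.
   Context: An explanation (method) is a map $e:\mathbb{R}^d\to\{0,1\}^d$. For $\mathbf{v}\in\{0,1\}^d$, $\mathbf{x}_{\mathbf{v}}$ denotes the values of the coordinates selected by $\mathbf{v}$. The explanation is the random pair $\mathbf{x}_{e(\mathbf{x})}=(e(\mathbf{x}),\mathbf{x}_{e(\mathbf{x})})$, written $(\mathbf{v},\mathbf{a})$. The explanation indicator is $\mathbf{E}_{\mathbf{v}}=\mathbb{1}[e(\mathbf{x})=\mathbf{v}]$. Regular conditional distributions are assumed to exist. $e$ is encoding if there is a set $\mathbf{S}$ with $q(\mathbf{x}_{e(\mathbf{x})}\in\mathbf{S})>0$ such that for every $(\mathbf{v},\mathbf{a})\in\mathbf{S}$, $\mathbf{y}$ is not conditionally independent of $\mathbf{E}_{\mathbf{v}}$ given $\mathbf{x}_{\mathbf{v}}=\mathbf{a}$; otherwise it is non-encoding. Define $\mathrm{EVAL\text{-}X}(q,e)=\mathbb{E}_{(\mathbf{v},\mathbf{a})\sim q(\mathbf{x}_{e(\mathbf{x})})}\mathbb{E}_{\mathbf{y}\sim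 q(\mathbf{y}\mid \mathbf{x}_{e(\mathbf{x})}=(\mathbf{v},\mathbf{a}))}[\log q(\mathbf{y}\mid \mathbf{x}_{\mathbf{v}}=\mathbf{a})]$, the ENCODE-METER $\phi_q(e)=\mathbb{E}_{(\mathbf{v},\mathbf{a})\sim q(\mathbf{x}_{e(\mathbf{x})})}\mathbf{I}(\mathbf{E}_{\mathbf{v}};\mathbf{y}\mid \mathbf{x}_{\mathbf{v}}=\mathbf{a})$ (instantaneous conditional mutual information, i.e. mutual information between $\mathbf{E}_{\mathbf{v}}$ and $\mathbf{y}$ under the conditional distribution given $\mathbf{x}_{\mathbf{v}}=\mathbf{a}$), and $\mathrm{STRIPE\text{-}X}_\alpha(q,e)=\mathrm{EVAL\text{-}X}(q,e)-\alpha\,\phi_q(e)$. *)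

theory Defs
  imports "HOL-Probability.Probability"
begin

text \<open>Inputs live in \<open>real^'d\<close> (d = CARD('d)); a selection vector v in {0,1}^d is a subset of 'd;
  the label y ranges over a countable type 'y.\<close>

definition joint_space :: "('y::countable \<times> (real^'d)) measure" where
  "joint_space = count_space UNIV \<Otimes>\<^sub>M borel"

definition expl_space :: "('d set \<times> (real^'d)) measure" where
  "expl_space = count_space UNIV \<Otimes>\<^sub>M borel"

definition restr :: "'d set \<Rightarrow> real^'d \<Rightarrow> real^'d" where
  "restr v x = (\<chi> i. if i \<in> v then x $ i else 0)"

definition expl :: "(real^'d \<Rightarrow> 'd set) \<Rightarrow> real^'d \<Rightarrow> 'd set \<times> (real^'d)" where
  "expl e x = (e x, restr (e x) x)"

definition expl_law :: "('y \<times> (real^'d)) measure \<Rightarrow> (real^'d \<Rightarrow> 'd set) \<Rightarrow> ('d set \<times> (real^'d)) measure" where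
  "expl_law q e = distr q expl_space (\<lambda>z. expl e (snd z))"

text \<open>K is a family of regular conditional distributions of (y,x) given x_v:
  for each v, K v a is the conditional law of (y,x) given x_v = a.\<close>
definition is_rcd :: "('y::countable \<times> (real^'d)) measure \<Rightarrow> ('d set \<Rightarrow> real^'d \<Rightarrow> ('y \<times> (real^'d)) measure) \<Rightarrow> bool" where
  "is_rcd q K \<longleftrightarrow> (\<forall>v.
     K v \<in> borel \<rightarrow>\<^sub>M prob_algebra joint_space \<and>
     (\<forall>A\<in>sets joint_space. \<forall>B\<in>sets borel.
        emeasure q (A \<inter> {z. restr v (snd z) \<in> B})
        = (\<integral>\<^sup>+ z. indicator B (restr v (snd z)) * emeasure (K v (restr v (snd z))) A \<partial>q)))"

definition E_ind :: "(real^'d \<Rightarrow> 'd set) \<Rightarrow> 'd set \<Rightarrow> 'y \<times> (real^'d) \<Rightarrow> bool" where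
  "E_ind e v z = (e (snd z) = v)"

definition cond_y :: "('d set \<Rightarrow> real^'d \<Rightarrow> ('y \<times> (real^'d)) measure) \<Rightarrow> 'd set \<Rightarrow> real^'d \<Rightarrow> 'y \<Rightarrow> real" where
  "cond_y K v a y = measure (K v a) ({y} \<times> UNIV)"

text \<open>Inner expectation of EVAL-X: E_{y ~ q(y | x_{e(x)} = (v,a))} log q(y | x_v = a),
  where q(y | x_{e(x)} = (v,a)) = q(y | E_v = 1, x_v = a).\<close>
definition eval_inner :: "('d set \<Rightarrow> real^'d \<Rightarrow> ('y \<times> (real^'d)) measure) \<Rightarrow> (real^'d \<Rightarrow> 'd set)
    \<Rightarrow> 'd set \<Rightarrow> real^'d \<Rightarrow> real" where
  "eval_inner K e v a =
     (\<integral> z. indicator {z. E_ind e v z} z * ln (cond_y K v a (fst z)) \<partial>K v a)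
       / measure (K v a) {z. E_ind e v z}"

definition EVAL_X :: "('y \<times> (real^'d)) measure \<Rightarrow> ('d set \<Rightarrow> real^'d \<Rightarrow> ('y \<times> (real^'d)) measure)
    \<Rightarrow> (real^'d \<Rightarrow> 'd set) \<Rightarrow> real" where
  "EVAL_X q K e = (\<integral> p. eval_inner K e (fst p) (snd p) \<partial>expl_law q e)"

definition inst_cmi :: "('d set \<Rightarrow> real^'d \<Rightarrow> ('y::countable \<times> (real^'d)) measure) \<Rightarrow> (real^'d \<Rightarrow> 'd set)
    \<Rightarrow> 'd set \<Rightarrow> real^'d \<Rightarrow> real" where
  "inst_cmi K e v a = prob_space.mutual_information (K v a) (exp 1)
     (count_space UNIV) (count_space UNIV) (E_ind e v) fst"

definition encode_meter :: "('y::countable \<times> (real^'d)) measure \<Rightarrow> ('d set \<Rightarrow> real^'d \<Rightarrow> ('y \<times> (real^'d)) measure)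
    \<Rightarrow> (real^'d \<Rightarrow> 'd set) \<Rightarrow> real" where
  "encode_meter q K e = (\<integral> p. inst_cmi K e (fst p) (snd p) \<partial>expl_law q e)"

definition STRIPE_X :: "real \<Rightarrow> ('y::countable \<times> (real^'d)) measure \<Rightarrow> ('d set \<Rightarrow> real^'d \<Rightarrow> ('y \<times> (real^'d)) measure)
    \<Rightarrow> (real^'d \<Rightarrow> 'd set) \<Rightarrow> real" where
  "STRIPE_X \<alpha> q K e = EVAL_X q K e - \<alpha> * encode_meter q K e"

text \<open>(indep_var requires both variables to share a codomain, so E_v and y are
  injected into bool + 'y; this does not change the independence notion.)
  e is encoding: some measurable S with positive probability under the law of x_{e(x)}
  such that for every (v,a) in S, y is not independent of E_v given x_v = a.\<close>
definition encoding :: "('y::countable \<times> (real^'d)) measure \<Rightarrow> ('d set \<Rightarrow> real^'d \<Rightarrow> ('y \<times> (real^'d)) measure)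
    \<Rightarrow> (real^'d \<Rightarrow> 'd set) \<Rightarrow> bool" where
  "encoding q K e \<longleftrightarrow> (\<exists>S\<in>sets expl_space. measure (expl_law q e) S > 0 \<and>
     (\<forall>(v,a)\<in>S. \<not> prob_space.indep_var (K v a)
        (count_space UNIV) (\<lambda>z. Inl (E_ind e v z) :: bool + 'y)
        (count_space UNIV) (\<lambda>z. Inr (fst z) :: bool + 'y)))"

text \<open>Finite entropies: H_q(y) = -E log q(y) and H_q(y|x) = -E log q(y|x) are finite
  (the integrands are nonnegative, so finiteness = integrability).\<close>
definition finite_H_y :: "('y::countable \<times> (real^'d)) measure \<Rightarrow> bool" where
  "finite_H_y q \<longleftrightarrow> integrable q (\<lambda>z. ln (measure q ({fst z} \<times> UNIV)))"

definition finite_H_y_given_x :: "('y::countable \<times> (real^'d)) measure \<Rightarrow> ('d set \<Rightarrow> real^'d \<Rightarrow> ('y \<times> (real^'d)) measure) \<Rightarrow> bool" where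
  "finite_H_y_given_x q K \<longleftrightarrow> integrable q (\<lambda>z. ln (cond_y K UNIV (snd z) (fst z)))"

end

theory Submission
  imports Defs
begin

text \<open>For fixed (v, a), the instantaneous conditional mutual information is the mutual
  information of the discrete pair (E_v, y) under the probability measure K v a. Gibbs' inequality
  p ln (p / r) \<ge> p - r, summed over the values of (E_v, y), shows that it is nonnegative and
  vanishes exactly when the joint law factorises, i.e. when E_v and y are independent; as E_v is
  binary it is also bounded. So the ENCODE-METER, the integral of a bounded nonnegative function,
  is positive exactly when that function is nonzero on a set of positive measure: it is positive
  for encoding and zero for non-encoding explanations. Hence
  STRIPE-X_\<alpha>(e') - STRIPE-X_\<alpha>(e) = EVAL-X(e') - EVAL-X(e) + \<alpha> phi(e) with phi(e) > 0, which
  is positive for large \<alpha>.\<close>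

lemma diff_le_mult_ln_div:
  fixes p r :: real
  assumes "0 \<le> p" "0 \<le> r" "p > 0 \<Longrightarrow> r > 0"
  shows "p - r \<le> p * ln (p / r)"
proof (cases "p = 0")
  case False
  then have p: "p > 0" and r: "r > 0" using assms by auto
  have "ln (r / p) \<le> r / p - 1" using p r by (intro ln_le_minus_one) auto
  then have "p * (1 - r / p) \<le> p * ln (p / r)"
    using p r by (intro mult_left_mono) (auto simp: ln_div)
  moreover have "p * (1 - r / p) = p - r" using p by (simp add: field_simps)
  ultimately show ?thesis by simp
qed (use assms in simp)

lemma mult_ln_div_eq_diff_imp_eq:
  fixes p r :: real
  assumes "0 \<le> p" "0 \<le> r" "p > 0 \<Longrightarrow> r > 0" and eq: "p * ln (p / r) = p - r"
  shows "p = r"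
proof (cases "p = 0")
  case False
  then have p: "p > 0" and r: "r > 0" using assms by auto
  have "ln (r / p) = r / p - 1" using eq p r by (simp add: ln_div field_simps)
  then have "r / p = 1" using p r by (intro ln_eq_minus_one) auto
  then show ?thesis using p by (simp add: field_simps)
qed (use eq in simp)

lemma mult_ln_div_mult_le:
  fixes p a c :: real
  assumes "0 \<le> p" "p \<le> a" "p \<le> c"
  shows "p * ln (p / (a * c)) \<le> p * - ln a"
proof (cases "p = 0")
  case False
  then have p: "p > 0" and a: "a > 0" and c: "c > 0" using assms by auto
  have "p / (a * c) \<le> 1 / a" using p a c assms(3) by (simp add: field_simps)
  then have "ln (p / (a * c)) \<le> ln (1 / a)" using p a c by (intro ln_mono) auto
  then show ?thesis using p a by (intro mult_left_mono) (auto simp: ln_div)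
qed simp

lemma minus_ln_nonneg:
  fixes p :: real
  assumes "0 \<le> p" "p \<le> 1"
  shows "0 \<le> - ln p"
  using assms by (cases "p = 0") auto

lemma minus_ln_mult_le_one:
  fixes p :: real
  assumes "0 \<le> p" "p \<le> 1"
  shows "- ln p * p \<le> 1"
proof (cases "p = 0")
  case False
  then have p: "p > 0" using assms by auto
  have "ln (1 / p) \<le> 1 / p - 1" using p by (intro ln_le_minus_one) auto
  then have "- ln p * p \<le> (1 / p - 1) * p" using p by (intro mult_right_mono) (auto simp: ln_div)
  also have "\<dots> = 1 - p" using p by (simp add: field_simps)
  finally show ?thesis using p by simp
qed simp

definition law_pmf :: "'a measure \<Rightarrow> ('a \<Rightarrow> 'b) \<Rightarrow> 'b \<Rightarrow> real" where
  "law_pmf M X x = measure M {\<omega> \<in> space M. X \<omega> = x}"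

definition mi_summand :: "'a measure \<Rightarrow> ('a \<Rightarrow> 'b) \<Rightarrow> ('a \<Rightarrow> 'c) \<Rightarrow> 'b \<times> 'c \<Rightarrow> real" where
  "mi_summand M X Y w = law_pmf M (\<lambda>\<omega>. (X \<omega>, Y \<omega>)) w *
     ln (law_pmf M (\<lambda>\<omega>. (X \<omega>, Y \<omega>)) w / (law_pmf M X (fst w) * law_pmf M Y (snd w)))"

lemma count_space_pair_UNIV:
  "count_space UNIV \<Otimes>\<^sub>M count_space UNIV = (count_space UNIV :: ('b::countable \<times> 'c::countable) measure)"
  by (simp add: pair_measure_countable)

lemma measurable_Pair_count_space:
  fixes X :: "'a \<Rightarrow> 'b::countable" and Y :: "'a \<Rightarrow> 'c::countable"
  assumes "X \<in> M \<rightarrow>\<^sub>M count_space UNIV" "Y \<in> M \<rightarrow>\<^sub>M count_space UNIV"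
  shows "(\<lambda>\<omega>. (X \<omega>, Y \<omega>)) \<in> M \<rightarrow>\<^sub>M count_space UNIV"
  unfolding count_space_pair_UNIV[symmetric] using assms by (rule measurable_Pair)

context prob_space
begin

lemma law_pmf_nonneg: "0 \<le> law_pmf M X x"
  by (simp add: law_pmf_def)

lemma law_pmf_le_1: "law_pmf M X x \<le> 1"
  by (simp add: law_pmf_def)

lemma law_pmf_Pair_le:
  assumes [measurable]: "X \<in> M \<rightarrow>\<^sub>M count_space UNIV" "Y \<in> M \<rightarrow>\<^sub>M count_space UNIV"
  shows "law_pmf M (\<lambda>\<omega>. (X \<omega>, Y \<omega>)) (x, y) \<le> law_pmf M X x"
    and "law_pmf M (\<lambda>\<omega>. (X \<omega>, Y \<omega>)) (x, y) \<le> law_pmf M Y y"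
  unfolding law_pmf_def by (auto intro!: finite_measure_mono)

lemma distributed_law_pmf:
  fixes Z :: "'a \<Rightarrow> 'z::countable"
  assumes [measurable]: "Z \<in> M \<rightarrow>\<^sub>M count_space UNIV"
  shows "distributed M (count_space UNIV) Z (\<lambda>z. ennreal (law_pmf M Z z))"
  unfolding distributed_def
proof (intro conjI)
  show "distr M (count_space UNIV) Z = density (count_space UNIV) (\<lambda>z. ennreal (law_pmf M Z z))"
  proof (rule measure_eqI_countable[where A=UNIV])
    fix z :: 'z
    have "emeasure (distr M (count_space UNIV) Z) {z} = emeasure M {\<omega>\<in>space M. Z \<omega> = z}"
      by (subst emeasure_distr) (auto intro!: arg_cong[where f="emeasure M"])
    then show "emeasure (distr M (count_space UNIV) Z) {z}
        = emeasure (density (count_space UNIV) (\<lambda>z. ennreal (law_pmf M Z z))) {z}"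
      by (simp add: law_pmf_def emeasure_eq_measure emeasure_density nn_integral_count_space_indicator)
  qed auto
qed auto

lemma nn_integral_law_pmf_Pair:
  fixes X :: "'a \<Rightarrow> 'b" and Y :: "'a \<Rightarrow> 'c::countable"
  assumes [measurable]: "X \<in> M \<rightarrow>\<^sub>M count_space UNIV" "Y \<in> M \<rightarrow>\<^sub>M count_space UNIV"
  shows "(\<integral>\<^sup>+ y. ennreal (law_pmf M (\<lambda>\<omega>. (X \<omega>, Y \<omega>)) (x, y)) \<partial>count_space UNIV) = law_pmf M X x"
proof -
  have "ennreal (law_pmf M X x) = ennreal \<P>(\<omega> in M. \<exists>y\<in>UNIV. X \<omega> = x \<and> Y \<omega> = y)"
    by (simp add: law_pmf_def)
  also have "\<dots> = (\<integral>\<^sup>+ y. ennreal \<P>(\<omega> in M. X \<omega> = x \<and> Y \<omega> = y) \<partial>count_space UNIV)"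
    by (rule prob_EX_countable) auto
  finally show ?thesis
    by (simp add: law_pmf_def)
qed

lemma nn_integral_law_pmf:
  fixes Z :: "'a \<Rightarrow> 'z::countable"
  assumes "Z \<in> M \<rightarrow>\<^sub>M count_space UNIV"
  shows "(\<integral>\<^sup>+ z. ennreal (law_pmf M Z z) \<partial>count_space UNIV) = 1"
  using nn_integral_law_pmf_Pair[of "\<lambda>_. ()" Z "()"] assms
  by (simp add: law_pmf_def prob_space)

lemma has_bochner_integral_law_pmf:
  fixes Z :: "'a \<Rightarrow> 'z::countable"
  assumes "Z \<in> M \<rightarrow>\<^sub>M count_space UNIV"
  shows "has_bochner_integral (count_space UNIV) (law_pmf M Z) 1"
  by (rule has_bochner_integral_nn_integral) (simp_all add: law_pmf_nonneg nn_integral_law_pmf assms)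

lemma has_bochner_integral_law_pmf_mult:
  fixes X :: "'a \<Rightarrow> 'b::countable" and Y :: "'a \<Rightarrow> 'c::countable"
  assumes "X \<in> M \<rightarrow>\<^sub>M count_space UNIV" "Y \<in> M \<rightarrow>\<^sub>M count_space UNIV"
  shows "has_bochner_integral (count_space UNIV) (\<lambda>w. law_pmf M X (fst w) * law_pmf M Y (snd w)) 1"
proof (rule has_bochner_integral_nn_integral)
  show "(\<integral>\<^sup>+ w. ennreal (law_pmf M X (fst w) * law_pmf M Y (snd w)) \<partial>count_space UNIV) = ennreal 1"
    by (subst nn_integral_fst_count_space[symmetric])
       (simp add: ennreal_mult law_pmf_nonneg nn_integral_cmult nn_integral_law_pmf assms)
qed (simp_all add: law_pmf_nonneg)

lemma indep_var_count_space_iff_law_pmf: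
  fixes X Y :: "'a \<Rightarrow> 'b::countable"
  assumes [measurable]: "X \<in> M \<rightarrow>\<^sub>M count_space UNIV" "Y \<in> M \<rightarrow>\<^sub>M count_space UNIV"
  shows "indep_var (count_space UNIV) X (count_space UNIV) Y \<longleftrightarrow>
    (\<forall>x y. law_pmf M (\<lambda>\<omega>. (X \<omega>, Y \<omega>)) (x, y) = law_pmf M X x * law_pmf M Y y)"
proof -
  let ?PX = "distr M (count_space UNIV) X" and ?PY = "distr M (count_space UNIV) Y"
  let ?J = "distr M (count_space UNIV \<Otimes>\<^sub>M count_space UNIV) (\<lambda>\<omega>. (X \<omega>, Y \<omega>))"
  interpret PY: prob_space ?PY by (rule prob_space_distr) simp
  have prod: "emeasure (?PX \<Otimes>\<^sub>M ?PY) {(x, y)} = ennreal (law_pmf M X x * law_pmf M Y y)" for x y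
  proof -
    have "emeasure (?PX \<Otimes>\<^sub>M ?PY) ({x} \<times> {y}) = emeasure ?PX {x} * emeasure ?PY {y}"
      by (rule PY.emeasure_pair_measure_Times) auto
    then show ?thesis
      by (simp add: emeasure_distr law_pmf_def emeasure_eq_measure vimage_def Int_def
          conj_commute ennreal_mult)
  qed
  have joint: "emeasure ?J {w} = ennreal (law_pmf M (\<lambda>\<omega>. (X \<omega>, Y \<omega>)) w)" for w
    unfolding count_space_pair_UNIV
    by (subst emeasure_distr) (auto simp: law_pmf_def emeasure_eq_measure vimage_def Int_def conj_commute)
  have sets_prod: "sets (?PX \<Otimes>\<^sub>M ?PY) = Pow UNIV"
  proof -
    have "sets (?PX \<Otimes>\<^sub>M ?PY) = sets (count_space UNIV \<Otimes>\<^sub>M count_space UNIV :: ('b \<times> 'b) measure)"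
      by (intro sets_pair_measure_cong) auto
    then show ?thesis by (simp only: count_space_pair_UNIV) simp
  qed
  have sets_joint: "sets ?J = Pow UNIV"
    by (simp only: count_space_pair_UNIV sets_distr) simp
  have "indep_var (count_space UNIV) X (count_space UNIV) Y \<longleftrightarrow> ?PX \<Otimes>\<^sub>M ?PY = ?J"
    by (simp add: indep_var_distribution_eq)
  also have "\<dots> \<longleftrightarrow> (\<forall>w. emeasure (?PX \<Otimes>\<^sub>M ?PY) {w} = emeasure ?J {w})"
    by (auto intro: measure_eqI_countable[OF sets_prod sets_joint])
  also have "\<dots> \<longleftrightarrow> (\<forall>x y. law_pmf M (\<lambda>\<omega>. (X \<omega>, Y \<omega>)) (x, y) = law_pmf M X x * law_pmf M Y y)"
    by (auto simp: prod joint law_pmf_nonneg)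
  finally show ?thesis .
qed

lemma indep_var_Inl_Inr_iff_law_pmf:
  fixes X :: "'a \<Rightarrow> 'b::countable" and Y :: "'a \<Rightarrow> 'c::countable"
  assumes [measurable]: "X \<in> M \<rightarrow>\<^sub>M count_space UNIV" "Y \<in> M \<rightarrow>\<^sub>M count_space UNIV"
  shows "indep_var (count_space UNIV) (\<lambda>\<omega>. Inl (X \<omega>) :: 'b + 'c) (count_space UNIV) (\<lambda>\<omega>. Inr (Y \<omega>)) \<longleftrightarrow>
    (\<forall>x y. law_pmf M (\<lambda>\<omega>. (X \<omega>, Y \<omega>)) (x, y) = law_pmf M X x * law_pmf M Y y)"
proof -
  have "indep_var (count_space UNIV) (\<lambda>\<omega>. Inl (X \<omega>) :: 'b + 'c) (count_space UNIV) (\<lambda>\<omega>. Inr (Y \<omega>)) \<longleftrightarrow>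
    (\<forall>s t. law_pmf M (\<lambda>\<omega>. (Inl (X \<omega>) :: 'b + 'c, Inr (Y \<omega>) :: 'b + 'c)) (s, t)
       = law_pmf M (\<lambda>\<omega>. Inl (X \<omega>) :: 'b + 'c) s * law_pmf M (\<lambda>\<omega>. Inr (Y \<omega>) :: 'b + 'c) t)"
    by (intro indep_var_count_space_iff_law_pmf) measurable
  also have "\<dots> \<longleftrightarrow> (\<forall>x y. law_pmf M (\<lambda>\<omega>. (X \<omega>, Y \<omega>)) (x, y) = law_pmf M X x * law_pmf M Y y)"
  proof safe
    fix x y
    assume "\<forall>s t. law_pmf M (\<lambda>\<omega>. (Inl (X \<omega>) :: 'b + 'c, Inr (Y \<omega>) :: 'b + 'c)) (s, t)
       = law_pmf M (\<lambda>\<omega>. Inl (X \<omega>) :: 'b + 'c) s * law_pmf M (\<lambda>\<omega>. Inr (Y \<omega>) :: 'b + 'c) t"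
    from this[rule_format, of "Inl x" "Inr y"]
    show "law_pmf M (\<lambda>\<omega>. (X \<omega>, Y \<omega>)) (x, y) = law_pmf M X x * law_pmf M Y y"
      by (simp add: law_pmf_def)
  next
    fix s t :: "'b + 'c"
    assume "\<forall>x y. law_pmf M (\<lambda>\<omega>. (X \<omega>, Y \<omega>)) (x, y) = law_pmf M X x * law_pmf M Y y"
    then show "law_pmf M (\<lambda>\<omega>. (Inl (X \<omega>) :: 'b + 'c, Inr (Y \<omega>) :: 'b + 'c)) (s, t)
       = law_pmf M (\<lambda>\<omega>. Inl (X \<omega>) :: 'b + 'c) s * law_pmf M (\<lambda>\<omega>. Inr (Y \<omega>) :: 'b + 'c) t"
      by (cases s; cases t) (auto simp: law_pmf_def)
  qed
  finally show ?thesis .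
qed

context
  fixes X :: "'a \<Rightarrow> 'b::countable" and Y :: "'a \<Rightarrow> 'c::countable"
  assumes X[measurable]: "X \<in> M \<rightarrow>\<^sub>M count_space UNIV"
    and Y[measurable]: "Y \<in> M \<rightarrow>\<^sub>M count_space UNIV"
begin

lemma mutual_information_count_space:
  "mutual_information (exp 1) (count_space UNIV) (count_space UNIV) X Y
     = (\<integral>w. mi_summand M X Y w \<partial>count_space UNIV)"
proof -
  interpret information_space M "exp 1" by standard simp
  have "distributed M (count_space UNIV \<Otimes>\<^sub>M count_space UNIV) (\<lambda>\<omega>. (X \<omega>, Y \<omega>))
      (\<lambda>w. ennreal (law_pmf M (\<lambda>\<omega>. (X \<omega>, Y \<omega>)) w))"
    unfolding count_space_pair_UNIV by (intro distributed_law_pmf measurable_Pair_count_space X Y)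
  then have "mutual_information (exp 1) (count_space UNIV) (count_space UNIV) X Y
      = (\<integral>w. law_pmf M (\<lambda>\<omega>. (X \<omega>, Y \<omega>)) w * log (exp 1) (law_pmf M (\<lambda>\<omega>. (X \<omega>, Y \<omega>)) w
          / (law_pmf M X (fst w) * law_pmf M Y (snd w))) \<partial>(count_space UNIV \<Otimes>\<^sub>M count_space UNIV))"
    by (intro mutual_information_distr distributed_law_pmf X Y)
       (auto simp: law_pmf_nonneg sigma_finite_measure_count_space_countable)
  then show ?thesis
    by (simp add: count_space_pair_UNIV mi_summand_def log_def)
qed

lemma mi_summand_lower_bound:
  "law_pmf M (\<lambda>\<omega>. (X \<omega>, Y \<omega>)) w - law_pmf M X (fst w) * law_pmf M Y (snd w) \<le> mi_summand M X Y w"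
  unfolding mi_summand_def
  using law_pmf_Pair_le[OF X Y, of "fst w" "snd w"]
  by (intro diff_le_mult_ln_div) (auto simp: law_pmf_nonneg)

lemma mi_summand_eq_lower_bound_iff:
  "mi_summand M X Y w = law_pmf M (\<lambda>\<omega>. (X \<omega>, Y \<omega>)) w - law_pmf M X (fst w) * law_pmf M Y (snd w)
    \<longleftrightarrow> law_pmf M (\<lambda>\<omega>. (X \<omega>, Y \<omega>)) w = law_pmf M X (fst w) * law_pmf M Y (snd w)"
  unfolding mi_summand_def
  using law_pmf_Pair_le[OF X Y, of "fst w" "snd w"]
  by (auto intro: mult_ln_div_eq_diff_imp_eq simp: law_pmf_nonneg)

lemma mi_summand_upper_bound:
  "mi_summand M X Y w \<le> law_pmf M (\<lambda>\<omega>. (X \<omega>, Y \<omega>)) w * - ln (law_pmf M X (fst w))"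
  unfolding mi_summand_def
  using law_pmf_Pair_le[OF X Y, of "fst w" "snd w"]
  by (intro mult_ln_div_mult_le) (auto simp: law_pmf_nonneg)

end

context
  fixes X :: "'a \<Rightarrow> 'b::finite" and Y :: "'a \<Rightarrow> 'c::countable"
  assumes X[measurable]: "X \<in> M \<rightarrow>\<^sub>M count_space UNIV"
    and Y[measurable]: "Y \<in> M \<rightarrow>\<^sub>M count_space UNIV"
begin

lemma has_bochner_integral_mi_summand_upper_bound:
  "has_bochner_integral (count_space UNIV)
     (\<lambda>w. law_pmf M (\<lambda>\<omega>. (X \<omega>, Y \<omega>)) w * - ln (law_pmf M X (fst w)))
     (\<Sum>x\<in>UNIV. - ln (law_pmf M X x) * law_pmf M X x)"
proof (rule has_bochner_integral_nn_integral)
  have "(\<integral>\<^sup>+ w. ennreal (law_pmf M (\<lambda>\<omega>. (X \<omega>, Y \<omega>)) w * - ln (law_pmf M X (fst w))) \<partial>count_space UNIV)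
      = (\<integral>\<^sup>+ x. \<integral>\<^sup>+ y. ennreal (- ln (law_pmf M X x)) * ennreal (law_pmf M (\<lambda>\<omega>. (X \<omega>, Y \<omega>)) (x, y))
          \<partial>count_space UNIV \<partial>count_space UNIV)"
    by (subst nn_integral_fst_count_space[symmetric], intro nn_integral_cong)
       (metis ennreal_mult minus_ln_nonneg law_pmf_nonneg law_pmf_le_1 mult.commute fst_conv)
  also have "\<dots> = (\<integral>\<^sup>+ x. ennreal (- ln (law_pmf M X x)) * ennreal (law_pmf M X x) \<partial>count_space UNIV)"
    by (simp add: nn_integral_cmult nn_integral_law_pmf_Pair)
  also have "\<dots> = (\<Sum>x\<in>UNIV. ennreal (- ln (law_pmf M X x) * law_pmf M X x))"
    by (simp only: nn_integral_count_space_finite[OF finite] ennreal_mult[OF minus_ln_nonneg law_pmf_nonneg]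
        law_pmf_nonneg law_pmf_le_1)
  also have "\<dots> = ennreal (\<Sum>x\<in>UNIV. - ln (law_pmf M X x) * law_pmf M X x)"
    by (intro sum_ennreal mult_nonneg_nonneg minus_ln_nonneg law_pmf_nonneg law_pmf_le_1)
  finally show "(\<integral>\<^sup>+ w. ennreal (law_pmf M (\<lambda>\<omega>. (X \<omega>, Y \<omega>)) w * - ln (law_pmf M X (fst w))) \<partial>count_space UNIV)
      = ennreal (\<Sum>x\<in>UNIV. - ln (law_pmf M X x) * law_pmf M X x)" .
  show "0 \<le> (\<Sum>x\<in>UNIV. - ln (law_pmf M X x) * law_pmf M X x)"
    by (intro sum_nonneg mult_nonneg_nonneg minus_ln_nonneg law_pmf_nonneg law_pmf_le_1)
qed (simp, intro AE_I2 mult_nonneg_nonneg minus_ln_nonneg law_pmf_nonneg law_pmf_le_1)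

lemma integrable_mi_summand: "integrable (count_space UNIV) (mi_summand M X Y)"
proof (rule Bochner_Integration.integrable_bound)
  show "integrable (count_space UNIV) (\<lambda>w. law_pmf M (\<lambda>\<omega>. (X \<omega>, Y \<omega>)) w * - ln (law_pmf M X (fst w))
      + law_pmf M X (fst w) * law_pmf M Y (snd w))"
    using integrable.intros[OF has_bochner_integral_mi_summand_upper_bound]
      integrable.intros[OF has_bochner_integral_law_pmf_mult[OF X Y]]
    by (rule Bochner_Integration.integrable_add)
  have "\<bar>mi_summand M X Y w\<bar> \<le> \<bar>law_pmf M (\<lambda>\<omega>. (X \<omega>, Y \<omega>)) w * - ln (law_pmf M X (fst w))
      + law_pmf M X (fst w) * law_pmf M Y (snd w)\<bar>" for w
    using mi_summand_lower_bound[OF X Y, of w] mi_summand_upper_bound[OF X Y, of w]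
      mult_nonneg_nonneg[OF law_pmf_nonneg minus_ln_nonneg[OF law_pmf_nonneg law_pmf_le_1]]
      mult_nonneg_nonneg[OF law_pmf_nonneg law_pmf_nonneg] law_pmf_nonneg
    by (smt (verit))
  then show "AE w in count_space UNIV. norm (mi_summand M X Y w)
      \<le> norm (law_pmf M (\<lambda>\<omega>. (X \<omega>, Y \<omega>)) w * - ln (law_pmf M X (fst w))
        + law_pmf M X (fst w) * law_pmf M Y (snd w))"
    by (intro AE_I2) simp
qed simp

lemma mutual_information_count_space_eq_integral_gap:
  "mutual_information (exp 1) (count_space UNIV) (count_space UNIV) X Y
     = (\<integral>w. mi_summand M X Y w - (law_pmf M (\<lambda>\<omega>. (X \<omega>, Y \<omega>)) w
          - law_pmf M X (fst w) * law_pmf M Y (snd w)) \<partial>count_space UNIV)"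
proof -
  note joint = has_bochner_integral_law_pmf[OF measurable_Pair_count_space[OF X Y]]
  note product = has_bochner_integral_law_pmf_mult[OF X Y]
  show ?thesis
    using integrable_mi_summand integrable.intros[OF joint] integrable.intros[OF product]
    by (simp add: mutual_information_count_space[OF X Y] has_bochner_integral_integral_eq[OF joint]
        has_bochner_integral_integral_eq[OF product])
qed

lemma mutual_information_count_space_nonneg:
  "0 \<le> mutual_information (exp 1) (count_space UNIV) (count_space UNIV) X Y"
  unfolding mutual_information_count_space_eq_integral_gap
  using mi_summand_lower_bound[OF X Y] by (intro integral_nonneg_AE) (simp add: AE_count_space)

lemma mutual_information_count_space_le_card:
  "mutual_information (exp 1) (count_space UNIV) (count_space UNIV) X Y \<le> CARD('b)"
proof -
  have "mutual_information (exp 1) (count_space UNIV) (count_space UNIV) X Y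
      \<le> (\<integral>w. law_pmf M (\<lambda>\<omega>. (X \<omega>, Y \<omega>)) w * - ln (law_pmf M X (fst w)) \<partial>count_space UNIV)"
    unfolding mutual_information_count_space[OF X Y]
    using integrable_mi_summand integrable.intros[OF has_bochner_integral_mi_summand_upper_bound]
    by (intro integral_mono mi_summand_upper_bound[OF X Y])
  also have "\<dots> = (\<Sum>x\<in>UNIV. - ln (law_pmf M X x) * law_pmf M X x)"
    by (rule has_bochner_integral_integral_eq[OF has_bochner_integral_mi_summand_upper_bound])
  also have "\<dots> \<le> (\<Sum>x\<in>(UNIV :: 'b set). 1)"
    by (intro sum_mono minus_ln_mult_le_one law_pmf_nonneg law_pmf_le_1)
  finally show ?thesis by simp
qed

lemma mutual_information_count_space_eq_0_iff:
  "mutual_information (exp 1) (count_space UNIV) (count_space UNIV) X Y = 0 \<longleftrightarrow>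
    (\<forall>x y. law_pmf M (\<lambda>\<omega>. (X \<omega>, Y \<omega>)) (x, y) = law_pmf M X x * law_pmf M Y y)"
proof -
  have "integrable (count_space UNIV) (\<lambda>w. mi_summand M X Y w - (law_pmf M (\<lambda>\<omega>. (X \<omega>, Y \<omega>)) w
          - law_pmf M X (fst w) * law_pmf M Y (snd w)))"
    using integrable_mi_summand
      integrable.intros[OF has_bochner_integral_law_pmf[OF measurable_Pair_count_space[OF X Y]]]
      integrable.intros[OF has_bochner_integral_law_pmf_mult[OF X Y]]
    by (intro Bochner_Integration.integrable_diff)
  then show ?thesis
    unfolding mutual_information_count_space_eq_integral_gap
    by (subst integral_nonneg_eq_0_iff_AE)
       (auto simp: AE_count_space mi_summand_lower_bound[OF X Y] mi_summand_eq_lower_bound_iff[OF X Y])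
qed

end

end

lemma integral_nonneg_eq_0_iff_measure:
  fixes f :: "'a \<Rightarrow> real"
  assumes "finite_measure M" "integrable M f" "\<And>x. x \<in> space M \<Longrightarrow> 0 \<le> f x"
  shows "integral\<^sup>L M f = 0 \<longleftrightarrow> measure M {x \<in> space M. f x \<noteq> 0} = 0"
proof -
  have [measurable]: "f \<in> borel_measurable M" using assms(2) by simp
  have "integral\<^sup>L M f = 0 \<longleftrightarrow> (AE x in M. f x = 0)"
    using assms(2,3) by (intro integral_nonneg_eq_0_iff_AE) auto
  also have "\<dots> \<longleftrightarrow> emeasure M {x \<in> space M. f x \<noteq> 0} = 0"
    by (rule AE_iff_measurable) auto
  also have "\<dots> \<longleftrightarrow> measure M {x \<in> space M. f x \<noteq> 0} = 0"
    using assms(1) by (simp add: finite_measure.emeasure_eq_measure)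
  finally show ?thesis .
qed

lemma kernel_prob_space:
  assumes "K \<in> N \<rightarrow>\<^sub>M prob_algebra P" "a \<in> space N"
  shows "prob_space (K a)" and "sets (K a) = sets P"
  using measurable_space[OF assms] by (auto simp: space_prob_algebra)

lemma measurable_law_pmf_kernel:
  assumes K: "K \<in> N \<rightarrow>\<^sub>M prob_algebra P" and Z: "Z \<in> P \<rightarrow>\<^sub>M count_space UNIV"
  shows "(\<lambda>a. law_pmf (K a) Z z) \<in> borel_measurable N"
proof -
  have "{\<omega> \<in> space P. Z \<omega> = z} \<in> sets P" using Z by measurable
  then have "(\<lambda>a. measure (K a) {\<omega> \<in> space P. Z \<omega> = z}) \<in> borel_measurable N"
    by (intro measurable_compose[OF K measurable_measure_prob_algebra])
  moreover have "law_pmf (K a) Z z = measure (K a) {\<omega> \<in> space P. Z \<omega> = z}" if "a \<in> space N" for a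
    using sets_eq_imp_space_eq[OF kernel_prob_space(2)[OF K that]] by (simp add: law_pmf_def)
  ultimately show ?thesis by (simp cong: measurable_cong)
qed

lemma measurable_E_ind:
  assumes "e \<in> borel \<rightarrow>\<^sub>M count_space UNIV" and "sets P = sets joint_space"
  shows "E_ind e v \<in> P \<rightarrow>\<^sub>M count_space UNIV"
  unfolding measurable_cong_sets[OF assms(2) refl] joint_space_def E_ind_def
  using assms(1) by measurable

lemma measurable_fst_joint_space:
  assumes "sets P = sets joint_space"
  shows "(fst :: 'y::countable \<times> (real^'d) \<Rightarrow> 'y) \<in> P \<rightarrow>\<^sub>M count_space UNIV"
  unfolding measurable_cong_sets[OF assms refl] joint_space_def by measurable

context
  fixes K :: "'d set \<Rightarrow> real^'d \<Rightarrow> ('y::countable \<times> (real^'d)) measure"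
    and e :: "real^'d \<Rightarrow> 'd set" and v :: "'d set"
  assumes K: "K v \<in> borel \<rightarrow>\<^sub>M prob_algebra joint_space"
    and e: "e \<in> borel \<rightarrow>\<^sub>M count_space UNIV"
begin

lemma
  shows inst_cmi_eq_integral_mi_summand:
      "inst_cmi K e v a = (\<integral>w. mi_summand (K v a) (E_ind e v) fst w \<partial>count_space UNIV)"
    and inst_cmi_nonneg: "0 \<le> inst_cmi K e v a"
    and inst_cmi_le_2: "inst_cmi K e v a \<le> 2"
    and inst_cmi_eq_0_iff: "inst_cmi K e v a = 0 \<longleftrightarrow> prob_space.indep_var (K v a)
        (count_space UNIV) (\<lambda>z. Inl (E_ind e v z) :: bool + 'y)
        (count_space UNIV) (\<lambda>z. Inr (fst z) :: bool + 'y)"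
proof -
  interpret prob_space "K v a" using kernel_prob_space(1)[OF K] by simp
  have sets: "sets (K v a) = sets joint_space" using kernel_prob_space(2)[OF K] by simp
  note E = measurable_E_ind[OF e sets] and Y = measurable_fst_joint_space[OF sets]
  show "inst_cmi K e v a = (\<integral>w. mi_summand (K v a) (E_ind e v) fst w \<partial>count_space UNIV)"
    unfolding inst_cmi_def by (rule mutual_information_count_space[OF E Y])
  show "0 \<le> inst_cmi K e v a"
    unfolding inst_cmi_def by (rule mutual_information_count_space_nonneg[OF E Y])
  show "inst_cmi K e v a \<le> 2"
    using mutual_information_count_space_le_card[OF E Y] unfolding inst_cmi_def by simp
  show "inst_cmi K e v a = 0 \<longleftrightarrow> indep_var
        (count_space UNIV) (\<lambda>z. Inl (E_ind e v z) :: bool + 'y)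
        (count_space UNIV) (\<lambda>z. Inr (fst z) :: bool + 'y)"
    unfolding inst_cmi_def mutual_information_count_space_eq_0_iff[OF E Y]
      indep_var_Inl_Inr_iff_law_pmf[OF E Y] ..
qed

lemma borel_measurable_inst_cmi: "inst_cmi K e v \<in> borel_measurable borel"
proof -
  have E: "E_ind e v \<in> (joint_space :: ('y \<times> (real^'d)) measure) \<rightarrow>\<^sub>M count_space UNIV"
    by (rule measurable_E_ind[OF e refl])
  have Y: "(fst :: 'y \<times> (real^'d) \<Rightarrow> 'y) \<in> joint_space \<rightarrow>\<^sub>M count_space UNIV"
    by (rule measurable_fst_joint_space[OF refl])
  have "(\<lambda>a. mi_summand (K v a) (E_ind e v) fst w) \<in> borel_measurable borel" for w
    unfolding mi_summand_def
    by (intro borel_measurable_times borel_measurable_ln borel_measurable_divide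
        measurable_law_pmf_kernel[OF K] measurable_Pair_count_space E Y)
  then have "(\<lambda>(a, w). mi_summand (K v a) (E_ind e v) fst w) \<in> borel_measurable (borel \<Otimes>\<^sub>M count_space UNIV)"
    unfolding case_prod_beta'
    by (rule measurable_compose_countable'[where f="\<lambda>w p. mi_summand (K v (fst p)) (E_ind e v) fst w"
          and g=snd and I=UNIV, OF measurable_compose[OF measurable_fst]]) auto
  then show ?thesis
    unfolding inst_cmi_eq_integral_mi_summand[abs_def]
    by (intro sigma_finite_measure.borel_measurable_lebesgue_integral sigma_finite_measure_count_space_countable) auto
qed

end

lemma measurable_inst_cmi_expl_space:
  assumes "\<And>v. K v \<in> borel \<rightarrow>\<^sub>M prob_algebra joint_space" and "e \<in> borel \<rightarrow>\<^sub>M count_space UNIV"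
  shows "(\<lambda>p. inst_cmi K e (fst p) (snd p)) \<in> borel_measurable expl_space"
  unfolding expl_space_def
  by (rule measurable_pair_measure_countable1) (simp_all add: borel_measurable_inst_cmi assms)

lemma measurable_restr: "restr v \<in> borel \<rightarrow>\<^sub>M borel"
  unfolding restr_def
proof (intro borel_measurable_continuous_onI continuous_on_vec_lambda)
  show "continuous_on UNIV (\<lambda>x::real^'a. if i \<in> v then x $ i else 0)" for i
    by (cases "i \<in> v") (auto intro: continuous_intros)
qed

lemma measurable_expl:
  assumes "e \<in> borel \<rightarrow>\<^sub>M count_space UNIV"
  shows "expl e \<in> borel \<rightarrow>\<^sub>M expl_space"
  unfolding expl_def expl_space_def
proof (rule measurable_Pair)
  show "(\<lambda>x. restr (e x) x) \<in> borel \<rightarrow>\<^sub>M borel"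
    by (rule measurable_compose_countable'[where f=restr and g=e and I=UNIV])
       (auto simp: assms measurable_restr)
qed (rule assms)

lemma prob_space_expl_law:
  assumes "prob_space q" "sets q = sets joint_space" "e \<in> borel \<rightarrow>\<^sub>M count_space UNIV"
  shows "prob_space (expl_law q e)"
proof -
  have "snd \<in> q \<rightarrow>\<^sub>M borel"
    unfolding measurable_cong_sets[OF assms(2) refl] joint_space_def by simp
  then show ?thesis
    unfolding expl_law_def
    by (intro prob_space.prob_space_distr[OF assms(1)] measurable_compose[OF _ measurable_expl[OF assms(3)]])
qed

context
  fixes q :: "('y::countable \<times> (real^'d)) measure"
    and K :: "'d set \<Rightarrow> real^'d \<Rightarrow> ('y \<times> (real^'d)) measure"
    and e :: "real^'d \<Rightarrow> 'd set"
  assumes q: "prob_space q" "sets q = sets joint_space"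
    and K: "\<And>v. K v \<in> borel \<rightarrow>\<^sub>M prob_algebra joint_space"
    and e: "e \<in> borel \<rightarrow>\<^sub>M count_space UNIV"
begin

abbreviation inst_cmi_support :: "('d set \<times> (real^'d)) set" where
  "inst_cmi_support \<equiv> {p \<in> space expl_space. inst_cmi K e (fst p) (snd p) \<noteq> 0}"

lemma encode_meter_nonneg: "0 \<le> encode_meter q K e"
  unfolding encode_meter_def by (intro integral_nonneg_AE AE_I2 inst_cmi_nonneg K e)

lemma encode_meter_eq_0_iff: "encode_meter q K e = 0 \<longleftrightarrow> measure (expl_law q e) inst_cmi_support = 0"
proof -
  interpret prob_space "expl_law q e" by (rule prob_space_expl_law[OF q e])
  have meas: "(\<lambda>p. inst_cmi K e (fst p) (snd p)) \<in> borel_measurable (expl_law q e)"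
    using measurable_inst_cmi_expl_space[OF K e] by (simp add: expl_law_def)
  have "integrable (expl_law q e) (\<lambda>p. inst_cmi K e (fst p) (snd p))"
    by (rule integrable_const_bound[where B=2, OF AE_I2 meas])
       (simp add: inst_cmi_le_2 inst_cmi_nonneg K e)
  then show ?thesis
    unfolding encode_meter_def
    by (subst integral_nonneg_eq_0_iff_measure[OF finite_measure])
       (simp_all add: inst_cmi_nonneg K e expl_law_def)
qed

lemma encoding_iff_measure_inst_cmi_support: "encoding q K e \<longleftrightarrow> measure (expl_law q e) inst_cmi_support > 0"
proof
  assume "encoding q K e"
  then obtain S where S: "S \<in> sets expl_space" "measure (expl_law q e) S > 0"
    and dep: "\<forall>(v, a)\<in>S. \<not> prob_space.indep_var (K v a)
        (count_space UNIV) (\<lambda>z. Inl (E_ind e v z) :: bool + 'y)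
        (count_space UNIV) (\<lambda>z. Inr (fst z) :: bool + 'y)"
    unfolding encoding_def by blast
  interpret prob_space "expl_law q e" by (rule prob_space_expl_law[OF q e])
  have "S \<subseteq> inst_cmi_support"
    using dep sets.sets_into_space[OF S(1)] by (auto simp: inst_cmi_eq_0_iff[OF K e])
  then have "measure (expl_law q e) S \<le> measure (expl_law q e) inst_cmi_support"
    using measurable_inst_cmi_expl_space[OF K e] by (intro finite_measure_mono) (auto simp: expl_law_def)
  then show "measure (expl_law q e) inst_cmi_support > 0" using S(2) by linarith
next
  assume "measure (expl_law q e) inst_cmi_support > 0"
  moreover have "inst_cmi_support \<in> sets expl_space"
    using measurable_inst_cmi_expl_space[OF K e] by measurable
  ultimately show "encoding q K e"
    unfolding encoding_def by (auto simp: inst_cmi_eq_0_iff[OF K e])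
qed

lemma encode_meter_pos_iff_encoding: "0 < encode_meter q K e \<longleftrightarrow> encoding q K e"
  using encode_meter_nonneg encode_meter_eq_0_iff encoding_iff_measure_inst_cmi_support
    measure_nonneg[of "expl_law q e" inst_cmi_support]
  by linarith

end

theorem theorem2:
  fixes q :: "('y::countable \<times> (real^'d)) measure"
    and K :: "'d set \<Rightarrow> real^'d \<Rightarrow> ('y \<times> (real^'d)) measure"
    and e e' :: "real^'d \<Rightarrow> 'd set"
  assumes "prob_space q"
    and "sets q = sets joint_space"
    and "is_rcd q K"
    and "finite_H_y_given_x q K"
    and "finite_H_y q"
    and "e \<in> borel \<rightarrow>\<^sub>M count_space UNIV"
    and "e' \<in> borel \<rightarrow>\<^sub>M count_space UNIV"
    and "encoding q K e"
    and "\<not> encoding q K e'"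
  shows "\<exists>\<alpha>0. \<forall>\<alpha>>\<alpha>0. STRIPE_X \<alpha> q K e' > STRIPE_X \<alpha> q K e"
proof -
  have K: "K v \<in> borel \<rightarrow>\<^sub>M prob_algebra joint_space" for v
    using \<open>is_rcd q K\<close> unfolding is_rcd_def by blast
  have pos: "encode_meter q K e > 0"
    using encode_meter_pos_iff_encoding[of q K e, OF assms(1,2) K assms(6)] assms(8) by blast
  have zero: "encode_meter q K e' = 0"
    using encode_meter_pos_iff_encoding[of q K e', OF assms(1,2) K assms(7)]
      encode_meter_nonneg[of q K e', OF assms(1,2) K assms(7)]
      assms(9) by linarith
  show ?thesis
  proof (intro exI allI impI)
    fix \<alpha> assume "\<alpha> > (EVAL_X q K e - EVAL_X q K e') / encode_meter q K e"
    then have "\<alpha> * encode_meter q K e > EVAL_X q K e - EVAL_X q K e'"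
      using pos by (simp add: pos_divide_less_eq)
    then show "STRIPE_X \<alpha> q K e' > STRIPE_X \<alpha> q K e"
      unfolding STRIPE_X_def zero by simp
  qed
qed

end
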